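(* Let $\alpha\ge0$. There is a constant $C>0$ such that for all sufficiently large $k\in\mathbb N$, $$\int_{-\infty}^\infty h_k^2(x)(1+|x|)^\alpha dx\ge Ck^{\alpha/2}\quad\text{and}\quad\int_{-\infty}^\infty h_k^2(x)(1+|x|)^{-\alpha}dx\ge C\max\{k^{-\alpha/2},k^{-1/2}\}.$$
   Context: $h_k(t)=(2^kk!\sqrt\pi)^{-1/2}H_k(t)e^{-t^2/2}$ are the Hermite functions, where $H_k(t)=(-1)^ke^{t^2}\frac{d^k}{dt^k}e^{-t^2}$ are the Hermite polynomials. *)

theory Defs
  imports "HOL-Analysis.Analysis"
begin

definition hermite_poly :: "nat \<Rightarrow> real \<Rightarrow> real" where
  "hermite_poly k t = (-1) ^ k * exp (t\<^sup>2) * ((deriv ^^ k) (\<lambda>s. exp (- s\<^sup>2)) t)"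

definition hermite_fun :: "nat \<Rightarrow> real \<Rightarrow> real" where
  "hermite_fun k t = (2 ^ k * fact k * sqrt pi) powr (-1/2) * hermite_poly k t * exp (- t\<^sup>2 / 2)"

end

theory Submission
  imports Defs "HOL-Probability.Distributions" "HOL-Computational_Algebra.Polynomial"
begin

text \<open>
  Since \<open>h\<^sub>k\<^sup>2\<close> is a probability density, both bounds say where its mass lies.
  Orthogonality and the three-term recurrence of the Hermite polynomials give its moments:
  \<open>\<integral> h\<^sub>k\<^sup>2 = 1\<close>, \<open>\<integral> x\<^sup>2 h\<^sub>k\<^sup>2 = k + 1/2\<close> and \<open>\<integral> x\<^sup>4 h\<^sub>k\<^sup>2 = (6k\<^sup>2 + 6k + 3)/4\<close>.
  A Paley-Zygmund argument then puts a fixed fraction of the mass where \<open>x\<^sup>2 \<ge> k/2\<close>,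
  which gives the bound \<open>k powr (\<alpha> / 2)\<close>, and Chebyshev's inequality puts half of it
  where \<open>x\<^sup>2 \<le> 4k\<close>, which gives \<open>k powr (-\<alpha> / 2)\<close>.
  For the bound \<open>k powr (-1/2)\<close> we use that \<open>h\<^sub>k\<close> solves the Weber equation
  \<open>h'' = (x\<^sup>2 - (2k + 1)) h\<close>. The energy \<open>h'\<^sup>2 + (2k + 1 - x\<^sup>2) h\<^sup>2\<close> decreases away from
  the origin; the second moment forces its value at \<open>0\<close> to be of order \<open>\<surd>k\<close>, and on \<open>[0, 1]\<close>
  it is in turn bounded by \<open>O(k)\<close> times the mass of \<open>h\<^sub>k\<^sup>2\<close> there.
\<close>

section \<open>Hermite polynomials\<close>

fun hermite :: "nat \<Rightarrow> real poly" where
  "hermite 0 = 1"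
| "hermite (Suc k) = [:0, 2:] * hermite k - pderiv (hermite k)"

declare hermite.simps(2) [simp del]

lemma higher_deriv_gaussian:
  "(deriv ^^ k) (\<lambda>s. exp (- s\<^sup>2)) = (\<lambda>t. (-1) ^ k * poly (hermite k) t * exp (- t\<^sup>2))"
proof (induction k)
  case 0
  then show ?case by simp
next
  case (Suc k)
  have "((\<lambda>t. (-1) ^ k * poly (hermite k) t * exp (- t\<^sup>2)) has_real_derivative
          (-1) ^ Suc k * poly (hermite (Suc k)) t * exp (- t\<^sup>2)) (at t)" for t
    by (rule derivative_eq_intros poly_DERIV refl)+
       (simp add: hermite.simps(2) algebra_simps power2_eq_square)
  then show ?case
    by (simp only: funpow.simps(2) o_def Suc.IH) (auto intro!: DERIV_imp_deriv)
qed

lemma hermite_poly_eq_poly_hermite: "hermite_poly k t = poly (hermite k) t"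
proof -
  have "(-1) ^ k * (-1) ^ k = (1::real)"
    by (simp flip: power_mult_distrib)
  moreover have "exp (t\<^sup>2) * exp (- t\<^sup>2) = 1"
    by (simp flip: exp_add)
  ultimately show ?thesis
    unfolding hermite_poly_def higher_deriv_gaussian
    by (metis (no_types, lifting) mult.assoc mult.left_commute mult_1_right)
qed

lemma pderiv_hermite_Suc: "pderiv (hermite (Suc k)) = smult (2 * (real k + 1)) (hermite k)"
proof (induction k)
  case 0
  then show ?case by (simp add: pderiv_pCons hermite.simps)
next
  case (Suc k)
  have "pderiv (hermite (Suc (Suc k)))
      = smult 2 (hermite (Suc k)) + [:0, 2:] * pderiv (hermite (Suc k)) - pderiv (pderiv (hermite (Suc k)))"
    by (simp add: hermite.simps(2)[of "Suc k"] pderiv_diff pderiv_mult pderiv_pCons pderiv_smult algebra_simps)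
  also have "\<dots> = smult 2 (hermite (Suc k))
      + smult (2 * (real k + 1)) ([:0, 2:] * hermite k - pderiv (hermite k))"
    unfolding Suc by (simp add: pderiv_smult algebra_simps smult_diff_right)
  also have "\<dots> = smult 2 (hermite (Suc k)) + smult (2 * (real k + 1)) (hermite (Suc k))"
    by (simp only: hermite.simps(2)[of k, symmetric])
  finally show ?case
    by (simp add: smult_add_left[symmetric] del: smult_add_left)
qed

lemma hermite_ode:
  "pderiv (pderiv (hermite k)) = [:0, 2:] * pderiv (hermite k) - smult (2 * real k) (hermite k)"
proof -
  have "smult (2 * (real k + 1)) (hermite k)
      = smult 2 (hermite k) + [:0, 2:] * pderiv (hermite k) - pderiv (pderiv (hermite k))"
    by (simp only: pderiv_hermite_Suc[symmetric] hermite.simps(2)[of k])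
       (simp add: pderiv_diff pderiv_mult pderiv_pCons pderiv_smult algebra_simps)
  then show ?thesis
    by (simp add: algebra_simps smult_add_left)
qed

lemma x_times_hermite_Suc:
  "[:0, 1:] * hermite (Suc k) = smult (1/2) (hermite (Suc (Suc k))) + smult (real k + 1) (hermite k)"
  by (simp add: hermite.simps(2)[of "Suc k"] pderiv_hermite_Suc algebra_simps smult_diff_right)

lemma higher_pderiv_hermite_self: "(pderiv ^^ k) (hermite k) = [:2 ^ k * fact k:]"
proof (induction k)
  case (Suc k)
  have "(pderiv ^^ Suc k) (hermite (Suc k)) = smult (2 * (real k + 1)) ((pderiv ^^ k) (hermite k))"
    by (simp only: funpow_Suc_right o_def pderiv_hermite_Suc higher_pderiv_smult)
  then show ?case
    by (simp add: Suc algebra_simps)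
qed simp

lemma higher_pderiv_hermite_eq_0:
  assumes "k < m"
  shows "(pderiv ^^ m) (hermite k) = 0"
proof -
  obtain r where m: "m = Suc r + k"
    using assms by (auto dest!: less_imp_Suc_add)
  have "(pderiv ^^ m) (hermite k) = (pderiv ^^ Suc r) ((pderiv ^^ k) (hermite k))"
    by (simp only: m funpow_add o_def)
  also have "\<dots> = (pderiv ^^ r) (pderiv [:2 ^ k * fact k:])"
    by (simp only: higher_pderiv_hermite_self funpow_Suc_right o_def)
  also have "\<dots> = 0"
    by (induction r) (simp_all add: pderiv_pCons)
  finally show ?thesis .
qed

section \<open>Gaussian integrals of polynomials\<close>

definition gauss_integral :: "real poly \<Rightarrow> real" where
  "gauss_integral p = (LINT x|lborel. poly p x * exp (- x\<^sup>2))"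

lemma has_bochner_integral_gaussian_moment_even:
  "has_bochner_integral lborel (\<lambda>x::real. exp (- x\<^sup>2) * x ^ (2 * k))
     (sqrt pi * (fact (2 * k) / (2 ^ (2 * k) * fact k)))"
  using has_bochner_integral_even_function[OF gaussian_moment_even_pos[of k]] by simp

lemma has_bochner_integral_gaussian_moment_odd:
  "has_bochner_integral lborel (\<lambda>x::real. exp (- x\<^sup>2) * x ^ (2 * k + 1)) 0"
  by (rule has_bochner_integral_odd_function[OF gaussian_moment_odd_pos[of k]]) simp

lemma integrable_gaussian_moment: "integrable lborel (\<lambda>x::real. exp (- x\<^sup>2) * x ^ n)"
proof (cases "even n")
  case True
  then obtain k where "n = 2 * k"
    by (auto elim: evenE)
  then show ?thesis
    using has_bochner_integral_gaussian_moment_even integrable.intros by blast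
next
  case False
  then obtain k where "n = 2 * k + 1"
    by (auto elim: oddE)
  then show ?thesis
    using has_bochner_integral_gaussian_moment_odd integrable.intros by blast
qed

lemma integrable_poly_gaussian: "integrable lborel (\<lambda>x::real. poly p x * exp (- x\<^sup>2))"
proof -
  have "(\<lambda>x. poly p x * exp (- x\<^sup>2)) = (\<lambda>x. \<Sum>i\<le>degree p. coeff p i * (exp (- x\<^sup>2) * x ^ i))"
    by (simp add: poly_altdef sum_distrib_left sum_distrib_right fun_eq_iff mult_ac)
  then show ?thesis
    using integrable_gaussian_moment by simp
qed

lemma gauss_integral_add: "gauss_integral (p + q) = gauss_integral p + gauss_integral q"
  unfolding gauss_integral_def by (simp add: distrib_right integrable_poly_gaussian)

lemma gauss_integral_diff: "gauss_integral (p - q) = gauss_integral p - gauss_integral q"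
  unfolding gauss_integral_def by (simp add: left_diff_distrib integrable_poly_gaussian)

lemma gauss_integral_0: "gauss_integral 0 = 0"
  unfolding gauss_integral_def by simp

lemma gauss_integral_smult: "gauss_integral (smult c p) = c * gauss_integral p"
  unfolding gauss_integral_def by (simp add: mult.assoc)

lemma gauss_integral_sum: "gauss_integral (\<Sum>i\<in>A. p i) = (\<Sum>i\<in>A. gauss_integral (p i))"
  unfolding gauss_integral_def by (simp add: poly_sum sum_distrib_right integrable_poly_gaussian)

lemma gauss_integral_monom: "gauss_integral (monom c n) = c * (LINT x|lborel. exp (- x\<^sup>2) * x ^ n)"
  unfolding gauss_integral_def by (simp add: poly_monom mult_ac)

lemma gauss_integral_one: "gauss_integral 1 = sqrt pi"
  using gauss_integral_monom[of 1 0] has_bochner_integral_gaussian_moment_even[of 0]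
  by (simp add: has_bochner_integral_integral_eq)

lemma gaussian_moment_Suc_Suc:
  "2 * (LINT x|lborel. exp (- x\<^sup>2) * x ^ (n + 2)) = (real n + 1) * (LINT x|lborel. exp (- x\<^sup>2) * x ^ n)"
proof (cases "even n")
  case True
  then obtain k where n: "n = 2 * k"
    by (auto elim: evenE)
  have cancel: "2 * (2 * K * M * F / (4 * P * (K * G))) = M * (F / (P * G))"
    if "K > 0" "P > 0" "G > 0" for K M F P G :: real
    using that by (simp add: field_simps)
  have facts: "fact (2 * Suc k) = 2 * (real k + 1) * (2 * real k + 1) * (fact (2 * k) :: real)"
    "fact (Suc k) = (real k + 1) * (fact k :: real)" "(2 :: real) ^ (2 * Suc k) = 4 * 2 ^ (2 * k)"
    by (simp_all add: algebra_simps)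
  have fact_ratio: "2 * (fact (2 * Suc k) / (2 ^ (2 * Suc k) * fact (Suc k)))
      = (2 * real k + 1) * (fact (2 * k) / (2 ^ (2 * k) * fact k) :: real)"
    unfolding facts by (rule cancel) simp_all
  note moment = has_bochner_integral_gaussian_moment_even[THEN has_bochner_integral_integral_eq]
  have "n + 2 = 2 * Suc k"
    using n by simp
  then have "2 * (LINT x|lborel. exp (- x\<^sup>2) * x ^ (n + 2))
      = sqrt pi * (2 * (fact (2 * Suc k) / (2 ^ (2 * Suc k) * fact (Suc k))))"
    by (simp only: moment mult.left_commute)
  also have "\<dots> = (real n + 1) * (sqrt pi * (fact (2 * k) / (2 ^ (2 * k) * fact k)))"
    unfolding fact_ratio n by simp
  also have "\<dots> = (real n + 1) * (LINT x|lborel. exp (- x\<^sup>2) * x ^ n)"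
    by (simp only: n moment)
  finally show ?thesis .
next
  case False
  then obtain k where "n = 2 * k + 1"
    by (auto elim: oddE)
  then show ?thesis
    using has_bochner_integral_gaussian_moment_odd[of k] has_bochner_integral_gaussian_moment_odd[of "Suc k"]
    by (simp add: has_bochner_integral_integral_eq)
qed

lemma gauss_integral_pderiv_monom: "gauss_integral (pderiv (monom c n)) = gauss_integral ([:0, 2:] * monom c n)"
proof -
  have "[:0, 2:] * monom c n = monom (2 * c) (Suc n)"
    by (simp add: monom_Suc smult_monom)
  moreover have "(LINT (x::real)|lborel. exp (- x\<^sup>2) * x ^ 1) = 0"
    using has_bochner_integral_integral_eq[OF has_bochner_integral_gaussian_moment_odd[of 0]]
    by (simp only: mult_0_right add_0)
  ultimately show ?thesis
    using gaussian_moment_Suc_Suc[of "n - 1"]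
    by (cases n) (simp_all add: pderiv_monom gauss_integral_monom gauss_integral_0 algebra_simps)
qed

lemma gauss_integral_pderiv: "gauss_integral (pderiv p) = gauss_integral ([:0, 2:] * p)"
proof -
  have "pderiv p = (\<Sum>i\<le>degree p. pderiv (monom (coeff p i) i))"
    using higher_pderiv_sum[of 1 "\<lambda>i. monom (coeff p i) i" "{..degree p}"]
    by (simp add: poly_as_sum_of_monoms)
  then have "gauss_integral (pderiv p) = (\<Sum>i\<le>degree p. gauss_integral (pderiv (monom (coeff p i) i)))"
    by (simp add: gauss_integral_sum)
  also have "\<dots> = gauss_integral ([:0, 2:] * (\<Sum>i\<le>degree p. monom (coeff p i) i))"
    by (simp add: gauss_integral_pderiv_monom gauss_integral_sum sum_distrib_left)
  finally show ?thesis
    by (simp add: poly_as_sum_of_monoms)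
qed

lemma gauss_integral_hermite_Suc_mult:
  "gauss_integral (hermite (Suc k) * q) = gauss_integral (hermite k * pderiv q)"
proof -
  have "hermite (Suc k) * q = [:0, 2:] * (hermite k * q) - pderiv (hermite k) * q"
    by (simp add: hermite.simps(2) left_diff_distrib mult.assoc del: mult_pCons_left)
  then have "gauss_integral (hermite (Suc k) * q)
      = gauss_integral ([:0, 2:] * (hermite k * q)) - gauss_integral (pderiv (hermite k) * q)"
    by (simp add: gauss_integral_diff)
  also have "gauss_integral ([:0, 2:] * (hermite k * q)) = gauss_integral (pderiv (hermite k * q))"
    by (rule gauss_integral_pderiv[symmetric])
  also have "\<dots> = gauss_integral (hermite k * pderiv q) + gauss_integral (pderiv (hermite k) * q)"
    by (simp add: pderiv_mult gauss_integral_add mult.commute[of q])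
  finally show ?thesis
    by simp
qed

lemma gauss_integral_hermite_mult: "gauss_integral (hermite k * q) = gauss_integral ((pderiv ^^ k) q)"
proof (induction k arbitrary: q)
  case (Suc k)
  then show ?case
    by (simp only: gauss_integral_hermite_Suc_mult funpow_Suc_right o_def)
qed simp

definition hermite_norm_sq :: "nat \<Rightarrow> real" where
  "hermite_norm_sq k = 2 ^ k * fact k * sqrt pi"

lemma hermite_norm_sq_pos: "hermite_norm_sq k > 0"
  unfolding hermite_norm_sq_def by simp

lemma hermite_norm_sq_Suc: "hermite_norm_sq (Suc k) = 2 * (real k + 1) * hermite_norm_sq k"
  unfolding hermite_norm_sq_def by (simp add: algebra_simps)

lemma gauss_integral_hermite_hermite:
  "gauss_integral (hermite m * hermite n) = (if m = n then hermite_norm_sq n else 0)"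
proof (cases m n rule: linorder_cases)
  case less
  then show ?thesis
    by (simp add: mult.commute[of "hermite m"] gauss_integral_hermite_mult higher_pderiv_hermite_eq_0
        gauss_integral_0)
next
  case equal
  then show ?thesis
    by (simp add: gauss_integral_hermite_mult higher_pderiv_hermite_self hermite_norm_sq_def
        flip: gauss_integral_one gauss_integral_smult)
next
  case greater
  then show ?thesis
    by (simp add: gauss_integral_hermite_mult higher_pderiv_hermite_eq_0 gauss_integral_0)
qed

section \<open>Moments of the Hermite functions\<close>

lemma hermite_fun_eq: "hermite_fun k t = hermite_norm_sq k powr (-1/2) * poly (hermite k) t * exp (- t\<^sup>2 / 2)"
  unfolding hermite_fun_def hermite_poly_eq_poly_hermite hermite_norm_sq_def ..

lemma hermite_fun_sq: "(hermite_fun k t)\<^sup>2 = poly (hermite k * hermite k) t * exp (- t\<^sup>2) / hermite_norm_sq k"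
proof -
  have "(hermite_norm_sq k powr (-1/2))\<^sup>2 = 1 / hermite_norm_sq k"
    using hermite_norm_sq_pos[of k] by (simp add: powr_minus_divide powr_half_sqrt power_divide)
  moreover have "(exp (- t\<^sup>2 / 2))\<^sup>2 = exp (- t\<^sup>2)"
    by (simp add: power2_eq_square flip: exp_add)
  ultimately show ?thesis
    unfolding hermite_fun_eq power_mult_distrib by (simp add: power2_eq_square)
qed

lemma
  shows integrable_hermite_fun_sq_poly: "integrable lborel (\<lambda>x. (hermite_fun k x)\<^sup>2 * poly q x)"
    and integral_hermite_fun_sq_poly:
      "(LINT x|lborel. (hermite_fun k x)\<^sup>2 * poly q x) = gauss_integral (hermite k * hermite k * q) / hermite_norm_sq k"
proof -
  have eq: "(\<lambda>x. (hermite_fun k x)\<^sup>2 * poly q x)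
      = (\<lambda>x. poly (hermite k * hermite k * q) x * exp (- x\<^sup>2) / hermite_norm_sq k)"
    by (simp add: hermite_fun_sq fun_eq_iff)
  show "integrable lborel (\<lambda>x. (hermite_fun k x)\<^sup>2 * poly q x)"
    unfolding eq by (rule integrable_divide_zero[OF integrable_poly_gaussian])
  show "(LINT x|lborel. (hermite_fun k x)\<^sup>2 * poly q x) = gauss_integral (hermite k * hermite k * q) / hermite_norm_sq k"
    unfolding eq gauss_integral_def by simp
qed

lemma
  shows integrable_hermite_fun_sq_power: "integrable lborel (\<lambda>x. (hermite_fun k x)\<^sup>2 * x ^ n)"
    and integral_hermite_fun_sq_power:
      "(LINT x|lborel. (hermite_fun k x)\<^sup>2 * x ^ n) = gauss_integral (hermite k * hermite k * monom 1 n) / hermite_norm_sq k"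
  using integrable_hermite_fun_sq_poly[of k "monom 1 n"] integral_hermite_fun_sq_poly[of k "monom 1 n"]
  by (simp_all add: poly_monom)

lemma integrable_hermite_fun_sq: "integrable lborel (\<lambda>x. (hermite_fun k x)\<^sup>2)"
  using integrable_hermite_fun_sq_power[of k 0] by simp

lemma integral_hermite_fun_sq: "(LINT x|lborel. (hermite_fun k x)\<^sup>2) = 1"
  using integral_hermite_fun_sq_power[of k 0] hermite_norm_sq_pos[of k]
  by (simp add: gauss_integral_hermite_hermite)

lemma integral_hermite_fun_sq_x_sq: "(LINT x|lborel. (hermite_fun k x)\<^sup>2 * x ^ 2) = real k + 1/2"
proof -
  have "gauss_integral (hermite k * hermite k * monom 1 2) = gauss_integral (([:0, 1:] * hermite k) * ([:0, 1:] * hermite k))"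
    by (simp add: monom_altdef eval_nat_numeral algebra_simps)
  also have "\<dots> = (real k + 1/2) * hermite_norm_sq k"
  proof (cases k)
    case 0
    have "[:0, 1:] * hermite 0 = smult (1/2) (hermite (Suc 0))"
      by (simp add: hermite.simps(2))
    then show ?thesis
      using hermite_norm_sq_Suc[of 0]
      by (simp add: 0 gauss_integral_smult gauss_integral_hermite_hermite del: One_nat_def)
  next
    case (Suc j)
    show ?thesis
      unfolding Suc x_times_hermite_Suc
      by (simp only: distrib_left distrib_right mult_smult_left mult_smult_right gauss_integral_add
          gauss_integral_smult gauss_integral_hermite_hermite)
         (simp add: hermite_norm_sq_Suc algebra_simps)
  qed
  finally show ?thesis
    using integral_hermite_fun_sq_power[of k 2] hermite_norm_sq_pos[of k] by simp
qed

lemma x_sq_times_hermite: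
  "[:0, 0, 1:] * hermite (j + 2) = smult (1/4) (hermite (j + 4)) + smult (real j + 5/2) (hermite (j + 2))
     + smult ((real j + 2) * (real j + 1)) (hermite j)"
proof -
  have "[:0, 0, 1:] * hermite (j + 2) = [:0, 1:] * ([:0, 1:] * hermite (Suc (Suc j)))"
    by (simp add: algebra_simps)
  also have "\<dots> = smult (1/2) ([:0, 1:] * hermite (Suc (Suc (Suc j))))
      + smult (real (Suc j) + 1) ([:0, 1:] * hermite (Suc j))"
    by (simp only: x_times_hermite_Suc[of "Suc j"] distrib_left mult_smult_right)
  also have "\<dots> = smult (1/4) (hermite (j + 4)) + smult (real j + 5/2) (hermite (j + 2))
     + smult ((real j + 2) * (real j + 1)) (hermite j)"
    unfolding x_times_hermite_Suc
    by (rule poly_eq_poly_eq_iff[THEN iffD1]) (simp add: fun_eq_iff field_simps eval_nat_numeral)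
  finally show ?thesis .
qed

lemma integral_hermite_fun_sq_x4:
  assumes "2 \<le> k"
  shows "(LINT x|lborel. (hermite_fun k x)\<^sup>2 * x ^ 4) = (6 * (real k)\<^sup>2 + 6 * real k + 3) / 4"
proof -
  obtain j where k: "k = j + 2"
    using assms le_Suc_ex by (metis add.commute)
  have N: "hermite_norm_sq (j + 2) = 4 * (real j + 2) * (real j + 1) * hermite_norm_sq j"
    "hermite_norm_sq (j + 4) = 16 * (real j + 4) * (real j + 3) * (real j + 2) * (real j + 1) * hermite_norm_sq j"
    by (simp_all add: hermite_norm_sq_Suc eval_nat_numeral algebra_simps)
  define A where "A = [:0, 0, 1:] * hermite (j + 2)"
  have "gauss_integral (hermite k * hermite k * monom 1 4) = gauss_integral (A * A)"
    unfolding A_def k by (simp add: monom_altdef eval_nat_numeral algebra_simps)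
  also have "\<dots> = (1/4)\<^sup>2 * hermite_norm_sq (j + 4) + (real j + 5/2)\<^sup>2 * hermite_norm_sq (j + 2)
      + ((real j + 2) * (real j + 1))\<^sup>2 * hermite_norm_sq j"
    unfolding A_def x_sq_times_hermite
    by (simp only: distrib_left distrib_right mult_smult_left mult_smult_right gauss_integral_add
        gauss_integral_smult gauss_integral_hermite_hermite)
       (simp add: power2_eq_square algebra_simps)
  also have "\<dots> = (6 * (real k)\<^sup>2 + 6 * real k + 3) / 4 * hermite_norm_sq k"
    unfolding N k by (simp add: field_simps power2_eq_square)
  finally show ?thesis
    using integral_hermite_fun_sq_power[of k 4] hermite_norm_sq_pos[of k] by simp
qed

section \<open>Solutions of the Weber equation\<close>

locale weber_solution =
  fixes h h' :: "real \<Rightarrow> real" and c :: real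
  assumes solution_has_real_derivative: "\<And>t. (h has_real_derivative h' t) (at t)"
    and derivative_has_real_derivative: "\<And>t. (h' has_real_derivative (t\<^sup>2 - c) * h t) (at t)"
begin

definition energy :: "real \<Rightarrow> real" where
  "energy t = (h' t)\<^sup>2 + (c - t\<^sup>2) * (h t)\<^sup>2"

lemma continuous_on_solution: "continuous_on S h"
  using solution_has_real_derivative DERIV_isCont continuous_at_imp_continuous_on by blast

lemma continuous_on_derivative: "continuous_on S h'"
  using derivative_has_real_derivative DERIV_isCont continuous_at_imp_continuous_on by blast

lemma continuous_on_energy: "continuous_on S energy"
  unfolding energy_def [abs_def] by (intro continuous_intros continuous_on_solution continuous_on_derivative)

lemma energy_has_real_derivative: "(energy has_real_derivative - (2 * t * (h t)\<^sup>2)) (at t)"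
proof -
  have "(energy has_real_derivative
      2 * h' t * ((t\<^sup>2 - c) * h t) + (- (2 * t) * (h t)\<^sup>2 + (c - t\<^sup>2) * (2 * h t * h' t))) (at t)"
    unfolding energy_def [abs_def]
    by (auto intro!: derivative_eq_intros solution_has_real_derivative derivative_has_real_derivative simp: power2_eq_square)
  then show ?thesis
    by (simp add: algebra_simps power2_eq_square)
qed

lemma energy_antimono:
  assumes "0 \<le> s" "s \<le> t"
  shows "energy t \<le> energy s"
proof (rule DERIV_nonpos_imp_nonincreasing[OF assms(2)])
  fix x assume "s \<le> x"
  then have "0 \<le> x"
    using assms(1) by linarith
  then show "\<exists>y. DERIV energy x :> y \<and> y \<le> 0"
    by (intro exI[of _ "- (2 * x * (h x)\<^sup>2)"]) (simp add: energy_has_real_derivative)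
qed

lemma energy_le_energy_0: "energy t \<le> energy 0"
proof (cases "0 \<le> t")
  case True
  then show ?thesis
    by (simp add: energy_antimono)
next
  case False
  show ?thesis
  proof (rule DERIV_nonneg_imp_nondecreasing[of t 0 energy])
    show "t \<le> 0"
      using False by simp
    fix x :: real assume "t \<le> x" "x \<le> 0"
    then show "\<exists>y. DERIV energy x :> y \<and> 0 \<le> y"
      by (intro exI[of _ "- (2 * x * (h x)\<^sup>2)"]) (simp add: energy_has_real_derivative mult_nonpos_nonneg)
  qed
qed

lemma abs_mult_le_energy:
  assumes "4 \<le> c - t\<^sup>2"
  shows "4 * \<bar>h t * h' t\<bar> \<le> energy t"
proof -
  have "4 * \<bar>h t * h' t\<bar> \<le> (h' t)\<^sup>2 + 4 * (h t)\<^sup>2"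
    using sum_squares_ge_zero[of "\<bar>h' t\<bar> - 2 * \<bar>h t\<bar>" 0]
    by (simp add: power2_eq_square algebra_simps abs_mult)
  also have "\<dots> \<le> energy t"
    unfolding energy_def using assms by (simp add: mult_right_mono)
  finally show ?thesis .
qed

lemma integrable_on_interval:
  "(\<lambda>t. f t * (h t)\<^sup>2) integrable_on {a..b}" if "continuous_on {a..b} f"
  using that by (intro integrable_continuous_interval continuous_intros continuous_on_solution)

lemma integral_energy_01:
  "integral {0..1} energy = h 1 * h' 1 - h 0 * h' 0 + 2 * integral {0..1} (\<lambda>t. (c - t\<^sup>2) * (h t)\<^sup>2)"
proof -
  have "((\<lambda>t. h t * h' t) has_vector_derivative (h' t)\<^sup>2 - (c - t\<^sup>2) * (h t)\<^sup>2) (at t within {0..1})" for t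
    by (rule has_real_derivative_iff_has_vector_derivative[THEN iffD1, THEN has_vector_derivative_at_within])
       (auto intro!: derivative_eq_intros solution_has_real_derivative derivative_has_real_derivative
        simp: power2_eq_square algebra_simps)
  then have FTC: "((\<lambda>t. (h' t)\<^sup>2 - (c - t\<^sup>2) * (h t)\<^sup>2) has_integral h 1 * h' 1 - h 0 * h' 0) {0..1}"
    by (intro fundamental_theorem_of_calculus) auto
  have int: "(\<lambda>t. (c - t\<^sup>2) * (h t)\<^sup>2) integrable_on {0..1}"
    by (intro integrable_on_interval continuous_intros)
  have "integral {0..1} energy
      = integral {0..1} (\<lambda>t. ((h' t)\<^sup>2 - (c - t\<^sup>2) * (h t)\<^sup>2) + 2 * ((c - t\<^sup>2) * (h t)\<^sup>2))"
    by (rule arg_cong[where f = "integral {0..1}"]) (simp add: fun_eq_iff energy_def)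
  also have "\<dots> = integral {0..1} (\<lambda>t. (h' t)\<^sup>2 - (c - t\<^sup>2) * (h t)\<^sup>2)
      + integral {0..1} (\<lambda>t. 2 * ((c - t\<^sup>2) * (h t)\<^sup>2))"
    using FTC int by (intro Henstock_Kurzweil_Integration.integral_add)
      (auto intro: has_integral_integrable integrable_on_cmult_left)
  also have "\<dots> = h 1 * h' 1 - h 0 * h' 0 + 2 * integral {0..1} (\<lambda>t. (c - t\<^sup>2) * (h t)\<^sup>2)"
    using FTC by (simp add: integral_unique integral_mult[OF int, symmetric])
  finally show ?thesis .
qed

lemma energy_0_minus_energy_1: "energy 0 - energy 1 \<le> 2 * integral {0..1} (\<lambda>t. (h t)\<^sup>2)"
proof -
  have "((\<lambda>t. - (2 * t * (h t)\<^sup>2)) has_integral energy 1 - energy 0) {0..1}"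
    by (intro fundamental_theorem_of_calculus)
       (auto intro!: has_real_derivative_iff_has_vector_derivative[THEN iffD1, THEN has_vector_derivative_at_within]
        energy_has_real_derivative)
  then have "energy 0 - energy 1 = integral {0..1} (\<lambda>t. 2 * t * (h t)\<^sup>2)"
    by (simp add: integral_unique has_integral_neg_iff)
  also have "\<dots> \<le> integral {0..1} (\<lambda>t. 2 * (h t)\<^sup>2)"
    by (intro integral_le integrable_on_interval continuous_intros) (auto intro: mult_left_le_one_le)
  finally show ?thesis
    by simp
qed

lemma energy_0_le_integral:
  assumes "5 \<le> c"
  shows "energy 0 \<le> 4 * (c + 1) * integral {0..1} (\<lambda>t. (h t)\<^sup>2)"
proof -
  let ?A = "integral {0..1} (\<lambda>t. (h t)\<^sup>2)"
  have "integral {0..1} (\<lambda>_::real. energy 1) \<le> integral {0..1} energy"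
    by (rule integral_le) (auto intro: integrable_continuous_interval continuous_on_energy energy_antimono)
  then have "energy 1 \<le> integral {0..1} energy"
    by simp
  also have "\<dots> \<le> energy 0 / 4 + energy 0 / 4 + 2 * (c * ?A)"
  proof -
    have "4 * \<bar>h 1 * h' 1\<bar> \<le> energy 0" "4 * \<bar>h 0 * h' 0\<bar> \<le> energy 0"
      using abs_mult_le_energy[of 1] abs_mult_le_energy[of 0] energy_le_energy_0[of 1] assms by auto
    moreover have "integral {0..1} (\<lambda>t. (c - t\<^sup>2) * (h t)\<^sup>2) \<le> integral {0..1} (\<lambda>t. c * (h t)\<^sup>2)"
      by (intro integral_le integrable_on_interval continuous_intros) (auto intro!: mult_right_mono)
    ultimately show ?thesis
      unfolding integral_energy_01 by (simp add: abs_le_iff)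
  qed
  finally show ?thesis
    using energy_0_minus_energy_1 by (simp add: algebra_simps)
qed

lemma energy_0_lower_pointwise:
  assumes "0 \<le> c" "0 < L"
  shows "(c - (1 + c / L\<^sup>2) * x\<^sup>2) * (h x)\<^sup>2 \<le> indicator {-L..L} x * energy 0"
proof (cases "\<bar>x\<bar> \<le> L")
  case True
  have "(c - (1 + c / L\<^sup>2) * x\<^sup>2) * (h x)\<^sup>2 \<le> (c - x\<^sup>2) * (h x)\<^sup>2"
    using assms by (intro mult_right_mono) (auto simp: algebra_simps)
  also have "\<dots> \<le> energy x"
    by (simp add: energy_def)
  also have "\<dots> \<le> energy 0"
    by (rule energy_le_energy_0)
  finally show ?thesis
    using True by (simp add: abs_le_iff)
next
  case False
  then have "L\<^sup>2 \<le> x\<^sup>2"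
    using assms(2) by (metis abs_le_square_iff less_eq_real_def not_le abs_of_pos)
  then have "c \<le> c / L\<^sup>2 * x\<^sup>2"
    using assms by (simp add: field_simps mult_left_mono)
  moreover have "(1 + c / L\<^sup>2) * x\<^sup>2 = x\<^sup>2 + c / L\<^sup>2 * x\<^sup>2"
    by (simp add: algebra_simps)
  ultimately have "c - (1 + c / L\<^sup>2) * x\<^sup>2 \<le> 0"
    using zero_le_power2[of x] by linarith
  moreover have "indicator {-L..L} x = (0::real)"
    using False by (auto simp: indicator_def abs_le_iff)
  ultimately show ?thesis
    by (simp add: mult_nonpos_nonneg)
qed

lemma energy_0_ge:
  assumes "0 < c"
    and "integrable lborel (\<lambda>x. (h x)\<^sup>2)" "integrable lborel (\<lambda>x. (h x)\<^sup>2 * x\<^sup>2)"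
    and "(LINT x|lborel. (h x)\<^sup>2) = 1" "(LINT x|lborel. (h x)\<^sup>2 * x\<^sup>2) = c / 2"
  shows "sqrt (2 * c) / 16 \<le> energy 0"
proof -
  define L where "L = sqrt (2 * c)"
  have L: "0 < L" "L\<^sup>2 = 2 * c"
    using assms(1) by (auto simp: L_def)
  have "c / 4 = (LINT x|lborel. c * (h x)\<^sup>2 - (1 + c / L\<^sup>2) * ((h x)\<^sup>2 * x\<^sup>2))"
    using assms L by (simp add: field_simps)
  also have "\<dots> \<le> (LINT x|lborel. indicator {-L..L} x * energy 0)"
    using assms(2,3) energy_0_lower_pointwise[of L] assms(1) L(1)
    by (intro integral_mono) (auto simp: algebra_simps)
  also have "\<dots> = 2 * L * energy 0"
    using L by simp
  finally have "L * L \<le> L * (16 * energy 0)"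
    using L by (simp add: power2_eq_square algebra_simps)
  then have "L \<le> 16 * energy 0"
    using L(1) by simp
  then show ?thesis
    by (simp add: L_def)
qed

lemma integral_sq_01_ge:
  assumes "5 \<le> c"
    and "integrable lborel (\<lambda>x. (h x)\<^sup>2)" "integrable lborel (\<lambda>x. (h x)\<^sup>2 * x\<^sup>2)"
    and "(LINT x|lborel. (h x)\<^sup>2) = 1" "(LINT x|lborel. (h x)\<^sup>2 * x\<^sup>2) = c / 2"
  shows "sqrt (2 * c) / (64 * (c + 1)) \<le> integral {0..1} (\<lambda>t. (h t)\<^sup>2)"
proof -
  have "sqrt (2 * c) / 16 \<le> 4 * (c + 1) * integral {0..1} (\<lambda>t. (h t)\<^sup>2)"
    using energy_0_ge[OF _ assms(2-)] energy_0_le_integral assms(1) by force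
  then show ?thesis
    using assms(1) by (simp add: field_simps)
qed

end

definition hermite_fun_deriv :: "nat \<Rightarrow> real \<Rightarrow> real" where
  "hermite_fun_deriv k t =
     hermite_norm_sq k powr (-1/2) * poly (pderiv (hermite k) - [:0, 1:] * hermite k) t * exp (- t\<^sup>2 / 2)"

lemma has_real_derivative_poly_half_gaussian:
  "((\<lambda>t. poly p t * exp (- t\<^sup>2 / 2)) has_real_derivative poly (pderiv p - [:0, 1:] * p) t * exp (- t\<^sup>2 / 2)) (at t)"
  by (auto intro!: derivative_eq_intros poly_DERIV simp: algebra_simps power2_eq_square)

lemma hermite_fun_has_real_derivative: "(hermite_fun k has_real_derivative hermite_fun_deriv k t) (at t)"
proof -
  have eq: "hermite_fun k = (\<lambda>t. hermite_norm_sq k powr (-1/2) * (poly (hermite k) t * exp (- t\<^sup>2 / 2)))"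
    by (simp add: fun_eq_iff hermite_fun_eq mult.assoc)
  show ?thesis
    unfolding eq hermite_fun_deriv_def mult.assoc by (rule DERIV_cmult[OF has_real_derivative_poly_half_gaussian])
qed

lemma hermite_fun_deriv_has_real_derivative:
  "(hermite_fun_deriv k has_real_derivative (t\<^sup>2 - (2 * real k + 1)) * hermite_fun k t) (at t)"
proof -
  let ?q = "pderiv (hermite k) - [:0, 1:] * hermite k"
  have "poly (pderiv ?q - [:0, 1:] * ?q) t = (t\<^sup>2 - (2 * real k + 1)) * poly (hermite k) t"
    by (simp add: pderiv_diff pderiv_mult pderiv_pCons hermite_ode algebra_simps power2_eq_square)
  moreover have "hermite_fun_deriv k = (\<lambda>t. hermite_norm_sq k powr (-1/2) * (poly ?q t * exp (- t\<^sup>2 / 2)))"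
    by (simp add: fun_eq_iff hermite_fun_deriv_def mult.assoc)
  ultimately show ?thesis
    using DERIV_cmult[OF has_real_derivative_poly_half_gaussian, of "hermite_norm_sq k powr (-1/2)" ?q t]
    by (simp add: hermite_fun_eq mult_ac)
qed

lemma weber_solution_hermite_fun:
  "weber_solution (hermite_fun k) (hermite_fun_deriv k) (2 * real k + 1)"
  by unfold_locales (rule hermite_fun_has_real_derivative hermite_fun_deriv_has_real_derivative)+

section \<open>Mass bounds for nonnegative densities\<close>

lemma weighted_integral_ge_near_origin:
  fixes f w :: "real \<Rightarrow> real"
  assumes "integrable lborel f" "integrable lborel (\<lambda>x. f x * x\<^sup>2)" "integrable lborel (\<lambda>x. f x * w x)"
    and "\<And>x. 0 \<le> f x" "\<And>x. 0 \<le> w x" "\<And>x. x\<^sup>2 \<le> a \<Longrightarrow> c \<le> w x"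
    and "0 \<le> c" "0 < a"
  shows "c * ((LINT x|lborel. f x) - (LINT x|lborel. f x * x\<^sup>2) / a) \<le> (LINT x|lborel. f x * w x)"
proof -
  have "c * ((LINT x|lborel. f x) - (LINT x|lborel. f x * x\<^sup>2) / a)
      = (LINT x|lborel. c * f x * (1 - x\<^sup>2 / a))"
    using assms(1,2,8) by (simp add: algebra_simps diff_divide_distrib)
  also have "\<dots> \<le> (LINT x|lborel. f x * w x)"
  proof (rule integral_mono)
    show "integrable lborel (\<lambda>x. c * f x * (1 - x\<^sup>2 / a))"
      using assms(1,2) by (simp add: algebra_simps diff_divide_distrib)
    fix x :: real
    show "c * f x * (1 - x\<^sup>2 / a) \<le> f x * w x"
    proof (cases "x\<^sup>2 \<le> a")
      case True
      then have "c * f x * (1 - x\<^sup>2 / a) \<le> c * f x"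
        using assms(4,7,8) by (simp add: mult_left_le)
      also have "\<dots> \<le> f x * w x"
        using mult_right_mono[OF assms(6)[OF True] assms(4)[of x]] by (simp add: mult.commute)
      finally show ?thesis .
    next
      case False
      then have "1 - x\<^sup>2 / a \<le> 0"
        using assms(8) by simp
      then show ?thesis
        using assms(4,5,7) by (meson mult_nonneg_nonneg mult_nonneg_nonpos order_trans)
    qed
  qed (use assms(3) in simp)
  finally show ?thesis .
qed

text \<open>The quadratic \<open>(y - a - y\<^sup>2 / b) / b\<close> in \<open>y = x\<^sup>2\<close> is a minorant of the indicator of \<open>a \<le> y\<close>.\<close>
lemma weighted_integral_ge_far_from_origin:
  fixes f w :: "real \<Rightarrow> real"
  assumes "integrable lborel f" "integrable lborel (\<lambda>x. f x * x\<^sup>2)" "integrable lborel (\<lambda>x. f x * x ^ 4)"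
    and "integrable lborel (\<lambda>x. f x * w x)"
    and "\<And>x. 0 \<le> f x" "\<And>x. 0 \<le> w x" "\<And>x. a \<le> x\<^sup>2 \<Longrightarrow> c \<le> w x"
    and "0 \<le> a" "0 \<le> c" "0 < b"
  shows "c / b * ((LINT x|lborel. f x * x\<^sup>2) - a * (LINT x|lborel. f x) - (LINT x|lborel. f x * x ^ 4) / b)
    \<le> (LINT x|lborel. f x * w x)"
proof -
  have "c / b * ((LINT x|lborel. f x * x\<^sup>2) - a * (LINT x|lborel. f x) - (LINT x|lborel. f x * x ^ 4) / b)
      = (LINT x|lborel. c / b * f x * (x\<^sup>2 - a - (x\<^sup>2)\<^sup>2 / b))"
    using assms(1-3) by (simp add: algebra_simps diff_divide_distrib flip: power_mult)
  also have "\<dots> \<le> (LINT x|lborel. f x * w x)"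
  proof (rule integral_mono)
    show "integrable lborel (\<lambda>x. c / b * f x * (x\<^sup>2 - a - (x\<^sup>2)\<^sup>2 / b))"
      using assms(1-3) by (simp add: algebra_simps diff_divide_distrib flip: power_mult)
    fix x :: real
    show "c / b * f x * (x\<^sup>2 - a - (x\<^sup>2)\<^sup>2 / b) \<le> f x * w x"
    proof (cases "a \<le> x\<^sup>2")
      case True
      have "x\<^sup>2 - (x\<^sup>2)\<^sup>2 / b \<le> b / 4"
        using assms(10) sum_squares_ge_zero[of "x\<^sup>2 - b / 2" 0] by (simp add: field_simps power2_eq_square)
      then have "x\<^sup>2 - a - (x\<^sup>2)\<^sup>2 / b \<le> b"
        using assms(8,10) by linarith
      then have "c / b * f x * (x\<^sup>2 - a - (x\<^sup>2)\<^sup>2 / b) \<le> c / b * f x * b"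
        using assms(5,9,10) by (intro mult_left_mono) auto
      also have "\<dots> \<le> f x * w x"
        using mult_right_mono[OF assms(7)[OF True] assms(5)[of x]] assms(10) by (simp add: mult.commute)
      finally show ?thesis .
    next
      case False
      then have "x\<^sup>2 - a - (x\<^sup>2)\<^sup>2 / b \<le> 0"
        using assms(10) by (smt (verit) divide_nonneg_pos zero_le_power2)
      then show ?thesis
        using assms(5,6,9,10) by (meson divide_nonneg_pos mult_nonneg_nonneg mult_nonneg_nonpos order_trans)
    qed
  qed (use assms(4) in simp)
  finally show ?thesis .
qed

lemma weighted_integral_ge_interval:
  fixes f w :: "real \<Rightarrow> real"
  assumes "continuous_on {a..b} f" "integrable lborel (\<lambda>x. f x * w x)"
    and "\<And>x. 0 \<le> f x" "\<And>x. 0 \<le> w x" "\<And>x. x \<in> {a..b} \<Longrightarrow> c \<le> w x"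
  shows "c * integral {a..b} f \<le> (LINT x|lborel. f x * w x)"
proof -
  have int: "set_integrable lborel {a..b} (\<lambda>x. c * f x)"
    unfolding set_integrable_def using assms(1)
    by (intro borel_integrable_compact) (auto intro!: continuous_intros)
  have "c * integral {a..b} f = integral {a..b} (\<lambda>x. c * f x)"
    by (rule integral_mult[OF integrable_continuous_interval[OF assms(1)]])
  also have "\<dots> = (LINT x:{a..b}|lborel. c * f x)"
    by (rule set_borel_integral_eq_integral(2)[OF int, symmetric])
  also have "\<dots> \<le> (LINT x|lborel. f x * w x)"
    unfolding set_lebesgue_integral_def
  proof (rule integral_mono)
    show "integrable lborel (\<lambda>x. indicator {a..b} x *\<^sub>R (c * f x))"
      using int by (simp add: set_integrable_def)
    fix x :: real
    show "indicator {a..b} x *\<^sub>R (c * f x) \<le> f x * w x"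
    proof (cases "x \<in> {a..b}")
      case True
      then show ?thesis
        using mult_right_mono[OF assms(5)[OF True] assms(3)[of x]] by (simp add: mult.commute)
    qed (use assms(3,4)[of x] in simp)
  qed (use assms(2) in simp)
  finally show ?thesis .
qed

section \<open>Weighted integrals of the Hermite functions\<close>

lemma integrable_hermite_fun_sq_powr: "integrable lborel (\<lambda>x. (hermite_fun k x)\<^sup>2 * (1 + \<bar>x\<bar>) powr a)"
proof (rule Bochner_Integration.integrable_bound)
  define n where "n = nat \<lceil>a\<rceil>"
  show "integrable lborel (\<lambda>x. (hermite_fun k x)\<^sup>2 * poly ([:2, 0, 1:] ^ n) x)"
    by (rule integrable_hermite_fun_sq_poly)
  show "AE x in lborel. norm ((hermite_fun k x)\<^sup>2 * (1 + \<bar>x\<bar>) powr a)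
      \<le> norm ((hermite_fun k x)\<^sup>2 * poly ([:2, 0, 1:] ^ n) x)"
  proof (rule AE_I2)
    fix x :: real
    have "0 \<le> (\<bar>x\<bar> - 1/2)\<^sup>2"
      by simp
    then have "\<bar>x\<bar> \<le> 1 + x\<^sup>2"
      by (simp add: power2_eq_square algebra_simps abs_mult_self)
    have "(1 + \<bar>x\<bar>) powr a \<le> (1 + \<bar>x\<bar>) powr real n"
      by (intro powr_mono) (auto simp: n_def real_nat_ceiling_ge)
    also have "\<dots> = (1 + \<bar>x\<bar>) ^ n"
      by (simp add: powr_realpow)
    also have "\<dots> \<le> (2 + x\<^sup>2) ^ n"
      by (rule power_mono) (use \<open>\<bar>x\<bar> \<le> 1 + x\<^sup>2\<close> in auto)
    finally have "(1 + \<bar>x\<bar>) powr a \<le> (2 + x\<^sup>2) ^ n" .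
    then show "norm ((hermite_fun k x)\<^sup>2 * (1 + \<bar>x\<bar>) powr a)
        \<le> norm ((hermite_fun k x)\<^sup>2 * poly ([:2, 0, 1:] ^ n) x)"
      by (simp add: abs_mult mult_left_mono poly_power power2_eq_square)
  qed
qed (use weber_solution.continuous_on_solution[OF weber_solution_hermite_fun] in
  \<open>auto intro!: borel_measurable_continuous_onI continuous_intros\<close>)

lemma integral_hermite_fun_sq_powr_ge:
  assumes "2 \<le> k" "0 \<le> \<alpha>"
  shows "1 / (32 * 2 powr (\<alpha> / 2)) * real k powr (\<alpha> / 2)
    \<le> (LINT x|lborel. (hermite_fun k x)\<^sup>2 * (1 + \<bar>x\<bar>) powr \<alpha>)"
proof -
  define c where "c = (real k / 2) powr (\<alpha> / 2)"
  have weight: "c \<le> (1 + \<bar>x\<bar>) powr \<alpha>" if "real k / 2 \<le> x\<^sup>2" for x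
  proof -
    have "sqrt (real k / 2) \<le> 1 + \<bar>x\<bar>"
      using real_sqrt_le_mono[OF that] by simp
    then have "sqrt (real k / 2) powr \<alpha> \<le> (1 + \<bar>x\<bar>) powr \<alpha>"
      using assms(2) by (intro powr_mono2) auto
    then show ?thesis
      by (simp add: c_def powr_half_sqrt [symmetric] powr_powr)
  qed
  have "c / 32 \<le> c / (8 * real k) * ((real k + 1/2) - real k / 2 - (6 * (real k)\<^sup>2 + 6 * real k + 3) / 4 / (8 * real k))"
  proof -
    have "2 \<le> real k"
      using assms(1) by simp
    then have "real k / 4 \<le> (real k + 1/2) - real k / 2 - (6 * (real k)\<^sup>2 + 6 * real k + 3) / 4 / (8 * real k)"
      by (simp add: field_simps power2_eq_square) (use mult_nonneg_nonneg[of "real k" "real k * 32"] in linarith)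
    then have "c / (8 * real k) * (real k / 4) \<le> c / (8 * real k) * ((real k + 1/2) - real k / 2
        - (6 * (real k)\<^sup>2 + 6 * real k + 3) / 4 / (8 * real k))"
      by (intro mult_left_mono) (simp_all add: c_def)
    then show ?thesis
      using assms(1) by simp
  qed
  also have "\<dots> \<le> (LINT x|lborel. (hermite_fun k x)\<^sup>2 * (1 + \<bar>x\<bar>) powr \<alpha>)"
    using weighted_integral_ge_far_from_origin[of "\<lambda>x. (hermite_fun k x)\<^sup>2" "\<lambda>x. (1 + \<bar>x\<bar>) powr \<alpha>"
        "real k / 2" c "8 * real k"] assms(1) weight
    by (simp add: integrable_hermite_fun_sq integrable_hermite_fun_sq_power integrable_hermite_fun_sq_powr
        integral_hermite_fun_sq integral_hermite_fun_sq_x_sq integral_hermite_fun_sq_x4 c_def)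
  finally show ?thesis
    by (simp add: c_def powr_divide)
qed

lemma integral_hermite_fun_sq_powr_neg_ge:
  assumes "1 \<le> k" "0 \<le> \<alpha>"
  shows "3 powr (- \<alpha>) / 2 * real k powr (- \<alpha> / 2)
    \<le> (LINT x|lborel. (hermite_fun k x)\<^sup>2 * (1 + \<bar>x\<bar>) powr (- \<alpha>))"
proof -
  define c where "c = (1 + 2 * sqrt (real k)) powr (- \<alpha>)"
  have weight: "c \<le> (1 + \<bar>x\<bar>) powr (- \<alpha>)" if "x\<^sup>2 \<le> 4 * real k" for x
  proof -
    have "\<bar>x\<bar> \<le> 2 * sqrt (real k)"
      using real_sqrt_le_mono[OF that] by (simp add: real_sqrt_mult)
    then show ?thesis
      unfolding c_def using assms(2) by (intro powr_mono2') auto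
  qed
  have "3 powr (- \<alpha>) * real k powr (- \<alpha> / 2) = (3 * sqrt (real k)) powr (- \<alpha>)"
    by (simp add: powr_mult powr_half_sqrt [symmetric] powr_powr)
  also have "\<dots> \<le> c"
    unfolding c_def using assms by (intro powr_mono2') (auto intro: add_pos_nonneg)
  finally have "3 powr (- \<alpha>) / 2 * real k powr (- \<alpha> / 2) \<le> c * (1/2)"
    by simp
  also have "\<dots> \<le> c * (1 - (real k + 1/2) / (4 * real k))"
    using assms(1) by (intro mult_left_mono) (simp_all add: c_def field_simps)
  also have "\<dots> \<le> (LINT x|lborel. (hermite_fun k x)\<^sup>2 * (1 + \<bar>x\<bar>) powr (- \<alpha>))"
    using weighted_integral_ge_near_origin[of "\<lambda>x. (hermite_fun k x)\<^sup>2" "\<lambda>x. (1 + \<bar>x\<bar>) powr (- \<alpha>)"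
        "4 * real k" c] assms(1) weight
    by (simp add: integrable_hermite_fun_sq integrable_hermite_fun_sq_power integrable_hermite_fun_sq_powr
        integral_hermite_fun_sq integral_hermite_fun_sq_x_sq c_def)
  finally show ?thesis .
qed

lemma integral_01_hermite_fun_sq_ge:
  assumes "2 \<le> k"
  shows "1 / (96 * sqrt (real k)) \<le> integral {0..1} (\<lambda>t. (hermite_fun k t)\<^sup>2)"
proof -
  have k: "0 < real k"
    using assms by simp
  have "1 / (96 * sqrt (real k)) = 2 * sqrt (real k) / (192 * real k)"
    using k by (simp add: field_simps flip: real_sqrt_mult)
  also have "\<dots> \<le> sqrt (2 * (2 * real k + 1)) / (192 * real k)"
    using k real_sqrt_le_mono[of "4 * real k" "2 * (2 * real k + 1)"]
    by (intro divide_right_mono) (auto simp: real_sqrt_mult)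
  also have "\<dots> \<le> sqrt (2 * (2 * real k + 1)) / (64 * (2 * real k + 1 + 1))"
    using assms by (intro divide_left_mono) auto
  also have "\<dots> \<le> integral {0..1} (\<lambda>t. (hermite_fun k t)\<^sup>2)"
    using assms
    by (intro weber_solution.integral_sq_01_ge[OF weber_solution_hermite_fun])
       (simp_all add: integrable_hermite_fun_sq integrable_hermite_fun_sq_power
        integral_hermite_fun_sq integral_hermite_fun_sq_x_sq)
  finally show ?thesis .
qed

lemma integral_hermite_fun_sq_powr_neg_ge_inv_sqrt:
  assumes "2 \<le> k" "0 \<le> \<alpha>"
  shows "2 powr (- \<alpha>) / 96 * real k powr (-1/2)
    \<le> (LINT x|lborel. (hermite_fun k x)\<^sup>2 * (1 + \<bar>x\<bar>) powr (- \<alpha>))"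
proof -
  have "2 powr (- \<alpha>) / 96 * real k powr (-1/2) = 2 powr (- \<alpha>) * (1 / (96 * sqrt (real k)))"
    using assms(1) by (simp add: powr_minus_divide powr_half_sqrt)
  also have "\<dots> \<le> 2 powr (- \<alpha>) * integral {0..1} (\<lambda>t. (hermite_fun k t)\<^sup>2)"
    using integral_01_hermite_fun_sq_ge[OF assms(1)] by (rule mult_left_mono) simp
  also have "\<dots> \<le> (LINT x|lborel. (hermite_fun k x)\<^sup>2 * (1 + \<bar>x\<bar>) powr (- \<alpha>))"
  proof (rule weighted_integral_ge_interval)
    fix x :: real assume "x \<in> {0..1}"
    then show "2 powr (- \<alpha>) \<le> (1 + \<bar>x\<bar>) powr (- \<alpha>)"
      using assms(2) by (intro powr_mono2') auto
  qed (auto intro: integrable_hermite_fun_sq_powr continuous_intros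
      weber_solution.continuous_on_solution[OF weber_solution_hermite_fun])
  finally show ?thesis .
qed

theorem lemma4p9:
  fixes \<alpha> :: real
  assumes "\<alpha> \<ge> 0"
  shows "\<exists>C>0. \<forall>\<^sub>F k in sequentially.
           (LINT x|lborel. (hermite_fun k x)\<^sup>2 * (1 + \<bar>x\<bar>) powr \<alpha>) \<ge> C * real k powr (\<alpha> / 2)
         \<and> (LINT x|lborel. (hermite_fun k x)\<^sup>2 * (1 + \<bar>x\<bar>) powr (- \<alpha>))
             \<ge> C * max (real k powr (- \<alpha> / 2)) (real k powr (-1/2))"
proof -
  define C where "C = min (1 / (32 * 2 powr (\<alpha> / 2))) (min (3 powr (- \<alpha>) / 2) (2 powr (- \<alpha>) / 96))"
  have C: "0 < C" "C \<le> 1 / (32 * 2 powr (\<alpha> / 2))" "C \<le> 3 powr (- \<alpha>) / 2" "C \<le> 2 powr (- \<alpha>) / 96"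
    by (simp_all add: C_def)
  have shrink: "C * y \<le> I" if "D * y \<le> I" "C \<le> D" "0 \<le> y" for D y I :: real
    using that mult_right_mono[of C D y] by linarith
  show ?thesis
    using shrink[OF integral_hermite_fun_sq_powr_ge[OF _ assms] C(2)]
      shrink[OF integral_hermite_fun_sq_powr_neg_ge[OF _ assms] C(3)]
      shrink[OF integral_hermite_fun_sq_powr_neg_ge_inv_sqrt[OF _ assms] C(4)]
    by (intro exI[of _ C] conjI C(1) eventually_sequentiallyI[of 2]) (auto simp: max_def)
qed

end
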